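(* Let $\alpha\in\mathbb{Q}(i)\setminus\mathbb{R}$ with $|\alpha|>1$, let $P_\alpha(X)=a_2X^2+a_1X+a_0$ with $a_0,a_1,a_2\in\mathbb{Z}$ coprime, $a_2>0$ and $P_\alpha(\alpha)=0$, let $\mathcal{D}=\{0,1,\ldots,|a_0|-1\}$, and let $\Lambda_\alpha=\mathbb{Z}[\alpha]\cap\alpha^{-1}\mathbb{Z}[\alpha^{-1}]$. Then for every $x\in\Lambda_\alpha$ there is a unique $d\in\mathcal{D}$ such that $\frac{x-d}{\alpha}\in\Lambda_\alpha$; consequently the backward division map $T_\alpha:\Lambda_\alpha\to\Lambda_\alpha$, $x\mapsto \frac{x-d}{\alpha}$ with this $d$, is well defined.
   Context: It is known that $\Lambda_\alpha=a_2\mathbb{Z}+(a_2\alpha+a_1)\mathbb{Z}$ is a lattice in $\mathbb{C}$. *)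

theory Defs
  imports Complex_Main
begin

definition int_adjoin :: "complex \<Rightarrow> complex set" where
  "int_adjoin a = {z. \<exists>n (c :: nat \<Rightarrow> int). z = (\<Sum>i\<le>n. of_int (c i) * a ^ i)}"

definition Lambda :: "complex \<Rightarrow> complex set" where
  "Lambda a = int_adjoin a \<inter> (\<lambda>z. inverse a * z) ` int_adjoin (inverse a)"

end

theory Submission
  imports Defs "HOL-Computational_Algebra.Polynomial_Factorial"
begin

text \<open>
  Write \<open>\<omega> = a\<^sub>2\<alpha> + a\<^sub>1\<close>, so that \<open>a\<^sub>0 = -\<alpha>\<omega>\<close>. The set \<open>\<Lambda>\<^sub>\<alpha>\<close> is the lattice
  \<open>a\<^sub>2\<int> + \<omega>\<int>\<close>. The nontrivial inclusion: if \<open>x = P(\<alpha>)\<close> and \<open>\<alpha>\<^sup>m x = R(\<alpha>)\<close> with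
  \<open>deg R < m\<close>, then the primitive quadratic \<open>f = a\<^sub>2X\<^sup>2 + a\<^sub>1X + a\<^sub>0\<close> divides
  \<open>X\<^sup>m P - R\<close> in \<open>\<int>[X]\<close> (the remainder of a pseudo-division is a linear integer
  polynomial vanishing at the non-real \<open>\<alpha>\<close>, and Gauss's lemma removes the scaling factor).
  Splitting the quotient at degree \<open>m - 1\<close> shows \<open>XP \<equiv> -a\<^sub>0s + a\<^sub>2tX (mod f)\<close> for
  integers \<open>s, t\<close>, and evaluating at \<open>\<alpha>\<close> gives \<open>x = ta\<^sub>2 + s\<omega>\<close>.

  For \<open>x = ua\<^sub>2 + v\<omega>\<close> and \<open>N = a\<^sub>2u + a\<^sub>1v\<close> we get
  \<open>(x - d)/\<alpha> = va\<^sub>2 - ((N - d)/a\<^sub>0)\<omega>\<close>, which lies in the lattice iff \<open>a\<^sub>0\<close> divides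
  \<open>N - d\<close>; so the digit is \<open>d = N mod |a\<^sub>0|\<close>.
\<close>

definition ipoly :: "int poly \<Rightarrow> complex \<Rightarrow> complex" where
  "ipoly p a = poly (map_poly of_int p) a"

lemma ipoly_add [simp]: "ipoly (p + q) a = ipoly p a + ipoly q a"
  and ipoly_diff [simp]: "ipoly (p - q) a = ipoly p a - ipoly q a"
  and ipoly_mult [simp]: "ipoly (p * q) a = ipoly p a * ipoly q a"
  and ipoly_smult [simp]: "ipoly (smult c p) a = of_int c * ipoly p a"
proof -
  have "map_poly (of_int :: int \<Rightarrow> complex) (p + q) = map_poly of_int p + map_poly of_int q"
    "map_poly (of_int :: int \<Rightarrow> complex) (p - q) = map_poly of_int p - map_poly of_int q"
    "map_poly (of_int :: int \<Rightarrow> complex) (p * q) = map_poly of_int p * map_poly of_int q"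
    "map_poly (of_int :: int \<Rightarrow> complex) (smult c p) = smult (of_int c) (map_poly of_int p)"
    by (rule poly_eqI; simp add: coeff_map_poly coeff_mult)+
  then show "ipoly (p + q) a = ipoly p a + ipoly q a" "ipoly (p - q) a = ipoly p a - ipoly q a"
    "ipoly (p * q) a = ipoly p a * ipoly q a" "ipoly (smult c p) a = of_int c * ipoly p a"
    by (simp_all add: ipoly_def)
qed

lemma ipoly_monom [simp]: "ipoly (monom c n) a = of_int c * a ^ n"
  by (simp add: ipoly_def map_poly_monom poly_monom)

lemma ipoly_pCons [simp]: "ipoly (pCons c p) a = of_int c + a * ipoly p a"
  by (simp add: ipoly_def map_poly_pCons)

lemma ipoly_0 [simp]: "ipoly 0 a = 0"
  by (simp add: ipoly_def)

lemma ipoly_sum: "ipoly (sum f A) a = (\<Sum>i\<in>A. ipoly (f i) a)"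
  by (induction A rule: infinite_finite_induct) auto

lemma int_adjoin_iff: "z \<in> int_adjoin a \<longleftrightarrow> (\<exists>p. z = ipoly p a)"
proof
  assume "z \<in> int_adjoin a"
  then obtain n c where "z = (\<Sum>i\<le>n. of_int (c i) * a ^ i)"
    by (auto simp: int_adjoin_def)
  also have "\<dots> = ipoly (\<Sum>i\<le>n. monom (c i) i) a"
    by (simp add: ipoly_sum)
  finally show "\<exists>p. z = ipoly p a" ..
next
  assume "\<exists>p. z = ipoly p a"
  then obtain p where "z = ipoly p a" ..
  then have "z = (\<Sum>i\<le>degree (map_poly (of_int :: int \<Rightarrow> complex) p). of_int (coeff p i) * a ^ i)"
    by (simp add: ipoly_def poly_altdef coeff_map_poly)
  then show "z \<in> int_adjoin a"
    unfolding int_adjoin_def by blast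
qed

lemma inverse_int_adjoin_clear_denominators:
  assumes "a \<noteq> 0" and "x \<in> (\<lambda>z. inverse a * z) ` int_adjoin (inverse a)"
  shows "\<exists>k. \<forall>m>k. \<exists>R. degree R < m \<and> ipoly R a = a ^ m * x"
proof -
  from assms(2) obtain k e where x: "x = inverse a * (\<Sum>i\<le>k. of_int (e i) * inverse a ^ i)"
    by (auto simp: int_adjoin_def)
  have "\<exists>R. degree R < m \<and> ipoly R a = a ^ m * x" if "m > k" for m
  proof (intro exI conjI)
    define R where "R = (\<Sum>i\<le>k. monom (e i) (m - 1 - i))"
    have "degree R \<le> m - 1"
      by (rule degree_le) (auto simp: R_def coeff_sum intro: sum.neutral)
    then show "degree R < m"
      using \<open>m > k\<close> by linarith
    have "of_int (e i) * a ^ (m - 1 - i) = a ^ m * (inverse a * (of_int (e i) * inverse a ^ i))"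
      if "i \<le> k" for i
    proof -
      have "m = (m - 1 - i) + Suc i"
        using \<open>m > k\<close> \<open>i \<le> k\<close> by linarith
      then have "a ^ m = a ^ (m - 1 - i) * a ^ Suc i"
        by (metis power_add)
      then show ?thesis
        using \<open>a \<noteq> 0\<close> by (simp add: field_simps)
    qed
    then show "ipoly R a = a ^ m * x"
      unfolding R_def ipoly_sum x sum_distrib_left by (intro sum.cong) simp_all
  qed
  then show ?thesis by blast
qed

lemma coeff_quadratic_mult:
  fixes p :: "'a::comm_ring_1 poly"
  shows "coeff ([:a0, a1, a2:] * p) (Suc (Suc n)) = a0 * coeff p (n + 2) + a1 * coeff p (Suc n) + a2 * coeff p n"
  by (simp add: coeff_pCons)

lemma X_mult_congruent_linear:
  fixes P R S :: "'a::comm_ring_1 poly"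
  assumes eq: "monom 1 m * P - R = [:a0, a1, a2:] * S" and "degree R < m" and "2 \<le> m"
  shows "monom 1 1 * P = [:a0, a1, a2:] * poly_shift (m - 1) S + [:- a0 * coeff S (m - 1), a2 * coeff S (m - 2):]"
proof -
  define f where "f = [:a0, a1, a2:]"
  define A where "A = poly_cutoff (m - 1) S"
  define B where "B = poly_shift (m - 1) S"
  define T where "T = monom 1 1 * P - f * B"
  have "S = A + monom 1 (m - 1) * B"
    by (rule poly_eqI) (auto simp: A_def B_def coeff_poly_cutoff coeff_poly_shift coeff_monom_mult)
  moreover have "monom 1 m = monom 1 (m - 1) * (monom 1 1 :: 'a poly)"
    using \<open>2 \<le> m\<close> by (simp add: mult_monom)
  ultimately have key: "monom 1 (m - 1) * T = R + f * A"
    using eq by (simp add: T_def f_def algebra_simps)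
  \<comment> \<open>The right-hand side has degree at most \<open>m\<close>, so \<open>T\<close> is linear.\<close>
  have "coeff T (Suc n) = (if n = 0 then a2 * coeff S (m - 2) else 0)" for n
  proof -
    have idx: "Suc n + (m - 1) = Suc (Suc (n + m - 2))"
      using \<open>2 \<le> m\<close> by simp
    have "coeff T (Suc n) = coeff (monom 1 (m - 1) * T) (Suc n + (m - 1))"
      by (simp add: coeff_monom_mult)
    also have "\<dots> = coeff (f * A) (Suc (Suc (n + m - 2)))"
      unfolding key idx using \<open>degree R < m\<close> by (simp add: coeff_eq_0)
    also have "\<dots> = (if n = 0 then a2 * coeff S (m - 2) else 0)"
      unfolding f_def coeff_quadratic_mult using \<open>2 \<le> m\<close> by (auto simp: A_def coeff_poly_cutoff)
    finally show ?thesis .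
  qed
  moreover have "coeff T 0 = - a0 * coeff S (m - 1)"
    by (simp add: T_def f_def B_def coeff_monom_mult coeff_mult_0 coeff_poly_shift)
  ultimately have "T = [:- a0 * coeff S (m - 1), a2 * coeff S (m - 2):]"
    by (intro poly_eqI) (auto simp: coeff_pCons split: nat.split)
  then show ?thesis by (simp add: T_def f_def B_def algebra_simps)
qed

lemma primitive_dvd_smult_imp_dvd:
  fixes f g :: "int poly"
  assumes "f dvd smult c g" and "c \<noteq> 0" and "content f = 1"
  shows "f dvd g"
proof -
  have "fract_poly f dvd smult (to_fract c) (fract_poly g)"
    using fract_poly_dvd[OF assms(1)] by simp
  then have "fract_poly f dvd fract_poly g"
    by (rule dvd_smult_cancel) (simp add: \<open>c \<noteq> 0\<close>)
  then show ?thesis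
    using \<open>content f = 1\<close> by (rule fract_poly_dvdD)
qed

lemma linear_ipoly_nonreal_root:
  assumes "degree r < 2" and "ipoly r \<alpha> = 0" and "\<alpha> \<notin> \<real>"
  shows "r = 0"
proof -
  have r: "r = [:coeff r 0, coeff r 1:]"
    using \<open>degree r < 2\<close> by (intro poly_eqI) (auto simp: coeff_pCons coeff_eq_0 split: nat.split)
  have "of_int (coeff r 0) + of_int (coeff r 1) * \<alpha> = 0"
    using \<open>ipoly r \<alpha> = 0\<close> by (subst (asm) r) (simp add: mult.commute)
  then have "coeff r 1 * Im \<alpha> = 0" and "coeff r 0 + coeff r 1 * Re \<alpha> = 0"
    by (simp_all add: complex_eq_iff)
  moreover have "Im \<alpha> \<noteq> 0"
    using \<open>\<alpha> \<notin> \<real>\<close> complex_is_Real_iff by blast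
  ultimately show ?thesis
    by (subst r) simp
qed

lemma quadratic_dvd_of_common_root:
  fixes f g :: "int poly"
  assumes "degree f = 2" and "content f = 1" and "\<alpha> \<notin> \<real>"
    and "ipoly f \<alpha> = 0" and "ipoly g \<alpha> = 0"
  shows "f dvd g"
proof -
  define r where "r = pseudo_mod g f"
  have "f \<noteq> 0" using \<open>degree f = 2\<close> by auto
  then obtain c q where "c \<noteq> 0" and div: "smult c g = f * q + r"
    using pseudo_mod(1)[of f g] by (auto simp: r_def)
  have "ipoly r \<alpha> = 0"
    using arg_cong[OF div, of "\<lambda>p. ipoly p \<alpha>"] assms(4,5) by simp
  moreover have "r = 0 \<or> degree r < 2"
    using pseudo_mod(2)[OF \<open>f \<noteq> 0\<close>] \<open>degree f = 2\<close> by (simp add: r_def)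
  ultimately have "r = 0"
    using linear_ipoly_nonreal_root \<open>\<alpha> \<notin> \<real>\<close> by blast
  with div have "f dvd smult c g" by simp
  then show ?thesis
    using \<open>c \<noteq> 0\<close> \<open>content f = 1\<close> by (rule primitive_dvd_smult_imp_dvd)
qed

definition int_lattice :: "complex \<Rightarrow> complex \<Rightarrow> complex set" where
  "int_lattice b c = {of_int u * b + of_int v * c | u v :: int. True}"

lemma int_lattice_real_coords_iff:
  assumes "b \<noteq> 0" and "c / b \<notin> \<real>"
  shows "of_real p * b + of_real q * c \<in> int_lattice b c \<longleftrightarrow> p \<in> \<int> \<and> q \<in> \<int>"
proof
  assume "of_real p * b + of_real q * c \<in> int_lattice b c"
  then obtain u v :: int where uv: "of_real p * b + of_real q * c = of_int u * b + of_int v * c"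
    by (auto simp: int_lattice_def)
  define z where "z = c / b"
  have "Im z \<noteq> 0"
    using \<open>c / b \<notin> \<real>\<close> complex_is_Real_iff z_def by blast
  from uv have "of_real p + of_real q * z = of_int u + of_int v * z"
    using \<open>b \<noteq> 0\<close> by (simp add: z_def field_simps)
  then have "p + q * Re z = of_int u + of_int v * Re z" and "q * Im z = of_int v * Im z"
    by (simp_all add: complex_eq_iff)
  with \<open>Im z \<noteq> 0\<close> show "p \<in> \<int> \<and> q \<in> \<int>" by simp
next
  assume "p \<in> \<int> \<and> q \<in> \<int>"
  then obtain u v where "p = of_int u" "q = of_int v"
    by (auto elim!: Ints_cases)
  then show "of_real p * b + of_real q * c \<in> int_lattice b c"
    by (auto simp: int_lattice_def)
qed

lemma of_int_divide_in_Ints_iff: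
  assumes "m \<noteq> 0"
  shows "(of_int n / of_int m :: 'a::field_char_0) \<in> \<int> \<longleftrightarrow> m dvd n"
proof
  assume "(of_int n / of_int m :: 'a) \<in> \<int>"
  then obtain k where "of_int n / of_int m = (of_int k :: 'a)"
    by (auto elim!: Ints_cases)
  with \<open>m \<noteq> 0\<close> have "n = m * k"
    by (simp add: field_simps flip: of_int_mult)
  then show "m dvd n" ..
qed (use \<open>m \<noteq> 0\<close> in auto)

lemma ex1_residue_dvd:
  fixes m n :: int
  assumes "m \<noteq> 0"
  shows "\<exists>!d. d \<in> {0..\<bar>m\<bar> - 1} \<and> m dvd n - d"
proof
  show "n mod \<bar>m\<bar> \<in> {0..\<bar>m\<bar> - 1} \<and> m dvd n - n mod \<bar>m\<bar>"
    using assms by (simp add: minus_mod_eq_mult_div)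
next
  fix d assume d: "d \<in> {0..\<bar>m\<bar> - 1} \<and> m dvd n - d"
  then have "\<bar>m\<bar> dvd n - d" by simp
  then have "n mod \<bar>m\<bar> = d mod \<bar>m\<bar>"
    by (simp only: mod_eq_dvd_iff)
  also have "\<dots> = d" using d by simp
  finally show "d = n mod \<bar>m\<bar>" ..
qed

lemma nonreal_root_imp_coeff0_nonzero:
  fixes \<alpha> :: complex and a0 a1 a2 :: int
  assumes "\<alpha> \<notin> \<real>" and "a2 \<noteq> 0" and "of_int a2 * \<alpha>^2 + of_int a1 * \<alpha> + of_int a0 = 0"
  shows "a0 \<noteq> 0"
proof
  assume "a0 = 0"
  then have "\<alpha> * (of_int a2 * \<alpha> + of_int a1) = of_int a2 * \<alpha>^2 + of_int a1 * \<alpha> + of_int a0"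
    by (simp add: power2_eq_square algebra_simps)
  with assms(3) have "\<alpha> * (of_int a2 * \<alpha> + of_int a1) = 0"
    by simp
  moreover have "\<alpha> \<noteq> 0"
    using \<open>\<alpha> \<notin> \<real>\<close> by auto
  ultimately have "\<alpha> = of_real (- of_int a1 / of_int a2)"
    using \<open>a2 \<noteq> 0\<close> by (simp add: eq_divide_eq add_eq_0_iff mult.commute)
  with \<open>\<alpha> \<notin> \<real>\<close> show False by auto
qed

lemma Lambda_subset_int_lattice:
  fixes \<alpha> :: complex and a0 a1 a2 :: int
  assumes "\<alpha> \<notin> \<real>" and "a2 \<noteq> 0" and "gcd (gcd a0 a1) a2 = 1"
    and root: "of_int a2 * \<alpha>^2 + of_int a1 * \<alpha> + of_int a0 = 0"
  shows "Lambda \<alpha> \<subseteq> int_lattice (of_int a2) (of_int a2 * \<alpha> + of_int a1)"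
proof
  fix x assume x: "x \<in> Lambda \<alpha>"
  define f where "f = [:a0, a1, a2:]"
  have f: "degree f = 2" "content f = 1" "ipoly f \<alpha> = 0"
    using assms(2-4) by (auto simp: f_def content_def gcd.assoc power2_eq_square algebra_simps)
  have "\<alpha> \<noteq> 0" using \<open>\<alpha> \<notin> \<real>\<close> by auto
  from x obtain P where xP: "x = ipoly P \<alpha>"
    by (auto simp: Lambda_def int_adjoin_iff)
  from x have "x \<in> (\<lambda>z. inverse \<alpha> * z) ` int_adjoin (inverse \<alpha>)"
    by (simp add: Lambda_def)
  then obtain k where "\<forall>m>k. \<exists>R. degree R < m \<and> ipoly R \<alpha> = \<alpha> ^ m * x"
    using inverse_int_adjoin_clear_denominators[OF \<open>\<alpha> \<noteq> 0\<close>] by blast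
  moreover have "k < k + 2" by simp
  ultimately obtain R where R: "degree R < k + 2" "ipoly R \<alpha> = \<alpha> ^ (k + 2) * x"
    by blast
  have "ipoly (monom 1 (k + 2) * P - R) \<alpha> = 0"
    by (simp add: xP R(2))
  then have "f dvd monom 1 (k + 2) * P - R"
    using f \<open>\<alpha> \<notin> \<real>\<close> by (intro quadratic_dvd_of_common_root) auto
  then obtain S where "monom 1 (k + 2) * P - R = f * S" ..
  then have XP: "monom 1 1 * P = f * poly_shift (k + 1) S + [:- a0 * coeff S (k + 1), a2 * coeff S k:]"
    using X_mult_congruent_linear[of "k + 2" P R a0 a1 a2 S] R(1) by (simp add: f_def)
  have a0: "of_int a0 = - \<alpha> * (of_int a2 * \<alpha> + of_int a1)"
    using root by algebra
  have "\<alpha> * x = of_int (- a0 * coeff S (k + 1)) + \<alpha> * of_int (a2 * coeff S k)"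
    using arg_cong[OF XP, of "\<lambda>p. ipoly p \<alpha>"] f(3) by (simp add: xP)
  also have "\<dots> = \<alpha> * (of_int (coeff S k) * of_int a2 + of_int (coeff S (k + 1)) * (of_int a2 * \<alpha> + of_int a1))"
    by (simp add: a0 algebra_simps)
  finally have "x = of_int (coeff S k) * of_int a2 + of_int (coeff S (k + 1)) * (of_int a2 * \<alpha> + of_int a1)"
    using \<open>\<alpha> \<noteq> 0\<close> by simp
  then show "x \<in> int_lattice (of_int a2) (of_int a2 * \<alpha> + of_int a1)"
    by (auto simp: int_lattice_def)
qed

lemma int_lattice_subset_Lambda:
  fixes \<alpha> :: complex and a0 a1 a2 :: int
  assumes "\<alpha> \<noteq> 0" and root: "of_int a2 * \<alpha>^2 + of_int a1 * \<alpha> + of_int a0 = 0"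
  shows "int_lattice (of_int a2) (of_int a2 * \<alpha> + of_int a1) \<subseteq> Lambda \<alpha>"
proof
  fix z assume "z \<in> int_lattice (of_int a2) (of_int a2 * \<alpha> + of_int a1)"
  then obtain u v where z: "z = of_int u * of_int a2 + of_int v * (of_int a2 * \<alpha> + of_int a1)"
    by (auto simp: int_lattice_def)
  have a0: "of_int a0 = - \<alpha> * (of_int a2 * \<alpha> + of_int a1)"
    using root by algebra
  have "z = ipoly [:a2 * u + a1 * v, a2 * v:] \<alpha>"
    by (simp add: z algebra_simps)
  then have "z \<in> int_adjoin \<alpha>"
    unfolding int_adjoin_iff ..
  have "z = inverse \<alpha> * ipoly [:- a1 * u - a0 * v, - a0 * u:] (inverse \<alpha>)"
    using \<open>\<alpha> \<noteq> 0\<close> by (simp add: z a0 field_simps power2_eq_square)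
  moreover have "ipoly [:- a1 * u - a0 * v, - a0 * u:] (inverse \<alpha>) \<in> int_adjoin (inverse \<alpha>)"
    unfolding int_adjoin_iff by blast
  ultimately show "z \<in> Lambda \<alpha>"
    using \<open>z \<in> int_adjoin \<alpha>\<close> by (auto simp: Lambda_def)
qed

lemma Lambda_eq_int_lattice:
  fixes \<alpha> :: complex and a0 a1 a2 :: int
  assumes "\<alpha> \<notin> \<real>" and "a2 \<noteq> 0" and "gcd (gcd a0 a1) a2 = 1"
    and "of_int a2 * \<alpha>^2 + of_int a1 * \<alpha> + of_int a0 = 0"
  shows "Lambda \<alpha> = int_lattice (of_int a2) (of_int a2 * \<alpha> + of_int a1)"
proof
  show "Lambda \<alpha> \<subseteq> int_lattice (of_int a2) (of_int a2 * \<alpha> + of_int a1)"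
    using assms by (rule Lambda_subset_int_lattice)
  have "\<alpha> \<noteq> 0" using \<open>\<alpha> \<notin> \<real>\<close> by auto
  then show "int_lattice (of_int a2) (of_int a2 * \<alpha> + of_int a1) \<subseteq> Lambda \<alpha>"
    using assms(4) by (rule int_lattice_subset_Lambda)
qed

lemma div_root_mem_int_lattice_iff:
  fixes \<alpha> :: complex and a0 a1 a2 u v d :: int
  assumes "\<alpha> \<notin> \<real>" and "a2 \<noteq> 0" and root: "of_int a2 * \<alpha>^2 + of_int a1 * \<alpha> + of_int a0 = 0"
  defines "\<omega> \<equiv> of_int a2 * \<alpha> + of_int a1"
  shows "(of_int u * of_int a2 + of_int v * \<omega> - of_int d) / \<alpha> \<in> int_lattice (of_int a2) \<omega>
    \<longleftrightarrow> a0 dvd a2 * u + a1 * v - d"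
proof -
  define N where "N = a2 * u + a1 * v - d"
  have "\<alpha> \<noteq> 0" using \<open>\<alpha> \<notin> \<real>\<close> by auto
  have "a0 \<noteq> 0"
    using assms(1-3) by (rule nonreal_root_imp_coeff0_nonzero)
  have a0: "of_int a0 = - \<alpha> * \<omega>"
    using root unfolding \<omega>_def by algebra
  have "\<omega> / of_int a2 \<notin> \<real>"
  proof
    assume "\<omega> / of_int a2 \<in> \<real>"
    then have "\<omega> / of_int a2 - of_int a1 / of_int a2 \<in> \<real>" by simp
    with \<open>a2 \<noteq> 0\<close> \<open>\<alpha> \<notin> \<real>\<close> show False by (simp add: \<omega>_def field_simps)
  qed
  have "\<omega> \<noteq> 0"
    using a0 \<open>a0 \<noteq> 0\<close> by auto
  have "(of_int u * of_int a2 + of_int v * \<omega> - of_int d) / \<alpha> = of_int v * of_int a2 + of_int N / \<alpha>"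
    using \<open>\<alpha> \<noteq> 0\<close> by (simp add: N_def \<omega>_def field_simps)
  also have "of_int N / \<alpha> = of_real (- of_int N / of_int a0) * \<omega>"
    using \<open>\<alpha> \<noteq> 0\<close> \<open>\<omega> \<noteq> 0\<close> by (simp add: a0 field_simps)
  also have "of_int v * of_int a2 + of_real (- of_int N / of_int a0) * \<omega> \<in> int_lattice (of_int a2) \<omega>
      \<longleftrightarrow> (of_int (- N) / of_int a0 :: real) \<in> \<int>"
    using int_lattice_real_coords_iff[of "of_int a2" \<omega> "of_int v" "- of_int N / of_int a0"]
      \<open>a2 \<noteq> 0\<close> \<open>\<omega> / of_int a2 \<notin> \<real>\<close> by simp
  also have "\<dots> \<longleftrightarrow> a0 dvd N"
    using \<open>a0 \<noteq> 0\<close> by (simp add: of_int_divide_in_Ints_iff)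
  finally show ?thesis by (simp add: N_def)
qed

theorem mainTheorem3:
  fixes \<alpha> :: complex and a0 a1 a2 :: int
  assumes "\<exists>p q :: rat. \<alpha> = Complex (of_rat p) (of_rat q)"
    and "\<alpha> \<notin> \<real>"
    and "cmod \<alpha> > 1"
    and "gcd (gcd a0 a1) a2 = 1"
    and "a2 > 0"
    and "of_int a2 * \<alpha>^2 + of_int a1 * \<alpha> + of_int a0 = 0"
  shows "\<forall>x \<in> Lambda \<alpha>. \<exists>!d :: int. d \<in> {0..\<bar>a0\<bar> - 1} \<and> (x - of_int d) / \<alpha> \<in> Lambda \<alpha>"
proof
  have "a2 \<noteq> 0"
    using \<open>a2 > 0\<close> by simp
  note L = Lambda_eq_int_lattice[OF assms(2) \<open>a2 \<noteq> 0\<close> assms(4,6)]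
  have "a0 \<noteq> 0"
    using assms(2) \<open>a2 \<noteq> 0\<close> assms(6) by (rule nonreal_root_imp_coeff0_nonzero)
  fix x assume "x \<in> Lambda \<alpha>"
  then obtain u v where x: "x = of_int u * of_int a2 + of_int v * (of_int a2 * \<alpha> + of_int a1)"
    by (auto simp: L int_lattice_def)
  from \<open>a0 \<noteq> 0\<close> show "\<exists>!d. d \<in> {0..\<bar>a0\<bar> - 1} \<and> (x - of_int d) / \<alpha> \<in> Lambda \<alpha>"
    unfolding L x div_root_mem_int_lattice_iff[OF assms(2) \<open>a2 \<noteq> 0\<close> assms(6)]
    by (rule ex1_residue_dvd)
qed

end
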